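(* Let $X$ be a connected thin combinatorial $2$-complex, and let $\mathcal H\le\mathrm{Aut}(X)$ be finitely generated relative to a finite collection of $0$-cell stabilizers. If $C$ is a compact subcomplex of $X$, then there is a connected compact subcomplex $Y_0$ of $X$ containing $C$ such that: (1) $\mathcal H$ is finitely generated relative to the stabilizers of a (finite) collection of $0$-cells of $Y_0$; and (2) $Y=\bigcup_{g\in\mathcal H}gY_0$ is a connected $\mathcal H$-cocompact subcomplex of $X$.
   Context: $\mathrm{Aut}(X)$ is the group of cellular automorphisms of $X$. A side at a $1$-cell $x$ is a pair $(R,r)$ with $R$ a $2$-cell and $r$ a $1$-cell of $\partial R$ mapping to $x$; $X$ is thin if each $1$-cell has finitely many sides. $\mathcal H$ is finitely generated relative to a finite collection of $0$-cell stabilizers if there are $0$-cells $v_1,\dots,v_n$ and a finite $S\subset\mathcal H$ with $S\cup\bigcup_i\mathrm{Stab}_{\mathcal H}(v_i)$ generating $\mathcal H$. A subcomplex is $\mathcal H$-cocompact if it is $\mathcal H$-invariant and has finitely many $\mathcal H$-orbits of cells. *)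

theory Defs
  imports "HOL-Algebra.Generated_Groups"
begin

text \<open>Each 1-cell e has a source and target 0-cell (loops and multiple 1-cells allowed).
  The attaching map of a 2-cell R is a closed combinatorial path bnd R, a nonempty list of
  oriented 1-cells (e, True) = traverse e forwards, (e, False) = backwards.\<close>

record ('v, 'e, 'f) cx2 =
  verts :: "'v set"
  edges :: "'e set"
  faces :: "'f set"
  src :: "'e \<Rightarrow> 'v"
  tgt :: "'e \<Rightarrow> 'v"
  bnd :: "'f \<Rightarrow> ('e \<times> bool) list"

definition ostart :: "('v, 'e, 'f) cx2 \<Rightarrow> 'e \<times> bool \<Rightarrow> 'v" where
  "ostart X p = (if snd p then src X (fst p) else tgt X (fst p))"

definition oend :: "('v, 'e, 'f) cx2 \<Rightarrow> 'e \<times> bool \<Rightarrow> 'v" where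
  "oend X p = (if snd p then tgt X (fst p) else src X (fst p))"

definition closed_path :: "('v, 'e, 'f) cx2 \<Rightarrow> ('e \<times> bool) list \<Rightarrow> bool" where
  "closed_path X p \<longleftrightarrow> p \<noteq> [] \<and> (\<forall>x\<in>set p. fst x \<in> edges X) \<and>
     (\<forall>i < length p. oend X (p ! i) = ostart X (p ! (Suc i mod length p)))"

definition comb2complex :: "('v, 'e, 'f) cx2 \<Rightarrow> bool" where
  "comb2complex X \<longleftrightarrow>
     (\<forall>e\<in>edges X. src X e \<in> verts X \<and> tgt X e \<in> verts X) \<and>
     (\<forall>R\<in>faces X. closed_path X (bnd X R))"

definition sides :: "('v, 'e, 'f) cx2 \<Rightarrow> 'e \<Rightarrow> ('f \<times> nat) set" where
  "sides X x = {(R, i). R \<in> faces X \<and> i < length (bnd X R) \<and> fst (bnd X R ! i) = x}"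

definition thin :: "('v, 'e, 'f) cx2 \<Rightarrow> bool" where
  "thin X \<longleftrightarrow> (\<forall>x\<in>edges X. finite (sides X x))"

definition subcomplex :: "('v, 'e, 'f) cx2 \<Rightarrow> 'v set \<Rightarrow> 'e set \<Rightarrow> 'f set \<Rightarrow> bool" where
  "subcomplex X V E F \<longleftrightarrow> V \<subseteq> verts X \<and> E \<subseteq> edges X \<and> F \<subseteq> faces X \<and>
     (\<forall>e\<in>E. src X e \<in> V \<and> tgt X e \<in> V) \<and>
     (\<forall>R\<in>F. \<forall>x\<in>set (bnd X R). fst x \<in> E)"

definition compact_sub :: "'v set \<Rightarrow> 'e set \<Rightarrow> 'f set \<Rightarrow> bool" where
  "compact_sub V E F \<longleftrightarrow> finite V \<and> finite E \<and> finite F"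

text \<open>Connectedness (equivalently, connectedness of the 1-skeleton): any two 0-cells
  are joined by an edge path inside the subcomplex.\<close>
definition adj_in :: "('v, 'e, 'f) cx2 \<Rightarrow> 'e set \<Rightarrow> 'v \<Rightarrow> 'v \<Rightarrow> bool" where
  "adj_in X E u w \<longleftrightarrow> (\<exists>e\<in>E. (src X e = u \<and> tgt X e = w) \<or> (src X e = w \<and> tgt X e = u))"

definition connected_sub :: "('v, 'e, 'f) cx2 \<Rightarrow> 'v set \<Rightarrow> 'e set \<Rightarrow> 'f set \<Rightarrow> bool" where
  "connected_sub X V E F \<longleftrightarrow> (\<forall>u\<in>V. \<forall>w\<in>V. (adj_in X E)\<^sup>*\<^sup>* u w)"

text \<open>Cellular automorphisms: bijections on 0-,1-,2-cells, with an orientation flag on 1-cells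
  (True = orientation preserved), compatible with endpoints, and carrying the boundary path of
  each 2-cell R to the boundary path of its image up to rotation and reversal.\<close>
definition rev_path :: "('e \<times> bool) list \<Rightarrow> ('e \<times> bool) list" where
  "rev_path p = rev (map (\<lambda>(e, b). (e, \<not> b)) p)"

definition cell_aut :: "('v, 'e, 'f) cx2 \<Rightarrow> ('v \<Rightarrow> 'v) \<Rightarrow> ('e \<Rightarrow> 'e) \<Rightarrow> ('e \<Rightarrow> bool)
    \<Rightarrow> ('f \<Rightarrow> 'f) \<Rightarrow> bool" where
  "cell_aut X fv fe oe ff \<longleftrightarrow>
     bij_betw fv (verts X) (verts X) \<and> bij_betw fe (edges X) (edges X) \<and>
     bij_betw ff (faces X) (faces X) \<and>
     (\<forall>e\<in>edges X. if oe e then src X (fe e) = fv (src X e) \<and> tgt X (fe e) = fv (tgt X e)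
                          else src X (fe e) = fv (tgt X e) \<and> tgt X (fe e) = fv (src X e)) \<and>
     (\<forall>R\<in>faces X. \<exists>k. map (\<lambda>(e, b). (fe e, b = oe e)) (bnd X R) = rotate k (bnd X (ff R))
                      \<or> map (\<lambda>(e, b). (fe e, b = oe e)) (bnd X R) = rotate k (rev_path (bnd X (ff R))))"

text \<open>A group G together with a faithful action on X by cellular automorphisms; this is the
  same as a subgroup H of Aut(X).\<close>
definition faithful_cell_action ::
  "('g, 'm) monoid_scheme \<Rightarrow> ('v, 'e, 'f) cx2 \<Rightarrow> ('g \<Rightarrow> 'v \<Rightarrow> 'v) \<Rightarrow> ('g \<Rightarrow> 'e \<Rightarrow> 'e)
    \<Rightarrow> ('g \<Rightarrow> 'e \<Rightarrow> bool) \<Rightarrow> ('g \<Rightarrow> 'f \<Rightarrow> 'f) \<Rightarrow> bool" where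
  "faithful_cell_action G X av ae ao af \<longleftrightarrow>
     group G \<and>
     (\<forall>g\<in>carrier G. cell_aut X (av g) (ae g) (ao g) (af g)) \<and>
     (\<forall>g\<in>carrier G. \<forall>h\<in>carrier G.
        (\<forall>v\<in>verts X. av (g \<otimes>\<^bsub>G\<^esub> h) v = av g (av h v)) \<and>
        (\<forall>e\<in>edges X. ae (g \<otimes>\<^bsub>G\<^esub> h) e = ae g (ae h e) \<and>
                       ao (g \<otimes>\<^bsub>G\<^esub> h) e = (ao g (ae h e) = ao h e)) \<and>
        (\<forall>R\<in>faces X. af (g \<otimes>\<^bsub>G\<^esub> h) R = af g (af h R))) \<and>
     (\<forall>v\<in>verts X. av \<one>\<^bsub>G\<^esub> v = v) \<and>
     (\<forall>e\<in>edges X. ae \<one>\<^bsub>G\<^esub> e = e \<and> ao \<one>\<^bsub>G\<^esub> e) \<and>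
     (\<forall>R\<in>faces X. af \<one>\<^bsub>G\<^esub> R = R) \<and>
     (\<forall>g\<in>carrier G. (\<forall>v\<in>verts X. av g v = v) \<and> (\<forall>e\<in>edges X. ae g e = e \<and> ao g e) \<and>
                    (\<forall>R\<in>faces X. af g R = R) \<longrightarrow> g = \<one>\<^bsub>G\<^esub>)"

definition vstab :: "('g, 'm) monoid_scheme \<Rightarrow> ('g \<Rightarrow> 'v \<Rightarrow> 'v) \<Rightarrow> 'v \<Rightarrow> 'g set" where
  "vstab G av v = {g \<in> carrier G. av g v = v}"

definition fg_rel_stabs :: "('g, 'm) monoid_scheme \<Rightarrow> ('g \<Rightarrow> 'v \<Rightarrow> 'v) \<Rightarrow> 'v set \<Rightarrow> bool" where
  "fg_rel_stabs G av W \<longleftrightarrow>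
     (\<exists>S vs. finite S \<and> S \<subseteq> carrier G \<and> finite vs \<and> vs \<subseteq> W \<and>
        generate G (S \<union> (\<Union>v\<in>vs. vstab G av v)) = carrier G)"

definition cocompact_sub ::
  "('g, 'm) monoid_scheme \<Rightarrow> ('g \<Rightarrow> 'v \<Rightarrow> 'v) \<Rightarrow> ('g \<Rightarrow> 'e \<Rightarrow> 'e) \<Rightarrow> ('g \<Rightarrow> 'f \<Rightarrow> 'f)
    \<Rightarrow> 'v set \<Rightarrow> 'e set \<Rightarrow> 'f set \<Rightarrow> bool" where
  "cocompact_sub G av ae af V E F \<longleftrightarrow>
     (\<forall>g\<in>carrier G. av g ` V \<subseteq> V \<and> ae g ` E \<subseteq> E \<and> af g ` F \<subseteq> F) \<and>
     (\<exists>A B D. finite A \<and> A \<subseteq> V \<and> finite B \<and> B \<subseteq> E \<and> finite D \<and> D \<subseteq> F \<and>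
        V \<subseteq> (\<Union>g\<in>carrier G. av g ` A) \<and> E \<subseteq> (\<Union>g\<in>carrier G. ae g ` B) \<and>
        F \<subseteq> (\<Union>g\<in>carrier G. af g ` D))"

end

theory Submission
  imports Defs
begin

text \<open>Join a base 0-cell \<open>v0\<close> by finitely many edge paths of \<open>X\<close> to the 0-cells of \<open>C\<close>, to
  0-cells \<open>v\<^sub>i\<close> whose stabilizers together with a finite set \<open>S\<close> generate \<open>\<H>\<close>, and to the
  translates \<open>s v0\<close> (\<open>s \<in> S\<close>); this gives \<open>Y\<^sub>0\<close>. The elements \<open>g\<close> for which \<open>g v0\<close> lies in the
  component of \<open>v0\<close> in \<open>Y = \<H> Y\<^sub>0\<close> form a subgroup. It contains \<open>S\<close>, and it contains each
  \<open>Stab(v\<^sub>i)\<close> because such a \<open>g\<close> carries a path from \<open>v0\<close> to \<open>v\<^sub>i\<close> to a path from \<open>g v0\<close> to \<open>v\<^sub>i\<close>.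
  Hence it is all of \<open>\<H>\<close>, and \<open>Y\<close> is connected.\<close>

lemma adj_in_symp: "symp (adj_in X E)"
  unfolding adj_in_def by (rule sympI) blast

lemma adj_in_rtranclp_sym: "(adj_in X E)\<^sup>*\<^sup>* u w \<Longrightarrow> (adj_in X E)\<^sup>*\<^sup>* w u"
  using symp_rtranclp[OF adj_in_symp] by (rule sympD)

lemma adj_in_rtranclp_mono:
  assumes "E \<subseteq> E'" "(adj_in X E)\<^sup>*\<^sup>* u w"
  shows "(adj_in X E')\<^sup>*\<^sup>* u w"
proof -
  have "adj_in X E a b \<longrightarrow> adj_in X E' a b" for a b
    using assms(1) unfolding adj_in_def by blast
  then show ?thesis
    using mono_rtranclp[of "adj_in X E" "adj_in X E'"] assms(2) by blast
qed

lemma connected_subI: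
  assumes "\<And>x. x \<in> V \<Longrightarrow> (adj_in X E)\<^sup>*\<^sup>* v0 x"
  shows "connected_sub X V E F"
  unfolding connected_sub_def
proof (intro ballI)
  fix u w assume "u \<in> V" "w \<in> V"
  then show "(adj_in X E)\<^sup>*\<^sup>* u w"
    using assms adj_in_rtranclp_sym rtranclp_trans by metis
qed

lemma finite_path_support:
  assumes "(adj_in X E)\<^sup>*\<^sup>* u w"
  shows "\<exists>P. finite P \<and> P \<subseteq> E \<and> (\<forall>x \<in> insert w (src X ` P \<union> tgt X ` P). (adj_in X P)\<^sup>*\<^sup>* u x)"
  using assms
proof (induction rule: rtranclp_induct)
  case base
  show ?case by (intro exI[of _ "{}"]) auto
next
  case (step y z)
  then obtain P where P: "finite P" "P \<subseteq> E"
    and reach: "\<forall>x \<in> insert y (src X ` P \<union> tgt X ` P). (adj_in X P)\<^sup>*\<^sup>* u x" by blast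
  from step.hyps(2) obtain e where e: "e \<in> E"
    and ends: "(src X e = y \<and> tgt X e = z) \<or> (src X e = z \<and> tgt X e = y)"
    unfolding adj_in_def by blast
  define P' where "P' = insert e P"
  have "P \<subseteq> P'" unfolding P'_def by blast
  have reach': "\<forall>x \<in> insert y (src X ` P \<union> tgt X ` P). (adj_in X P')\<^sup>*\<^sup>* u x"
  proof
    fix x assume "x \<in> insert y (src X ` P \<union> tgt X ` P)"
    with reach have "(adj_in X P)\<^sup>*\<^sup>* u x" by (rule bspec)
    then show "(adj_in X P')\<^sup>*\<^sup>* u x" by (rule adj_in_rtranclp_mono[OF \<open>P \<subseteq> P'\<close>])
  qed
  have "adj_in X P' y z"
    using e ends unfolding adj_in_def P'_def by blast
  moreover have "(adj_in X P')\<^sup>*\<^sup>* u y"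
    using reach' by simp
  ultimately have reach_z: "(adj_in X P')\<^sup>*\<^sup>* u z"
    by (rule rtranclp.rtrancl_into_rtrancl[rotated])
  have "src X ` P' \<union> tgt X ` P' \<subseteq> insert y (insert z (src X ` P \<union> tgt X ` P))"
    using ends unfolding P'_def by auto
  with reach' reach_z have "\<forall>x \<in> insert z (src X ` P' \<union> tgt X ` P'). (adj_in X P')\<^sup>*\<^sup>* u x"
    by blast
  moreover have "finite P'" "P' \<subseteq> E"
    using P e unfolding P'_def by auto
  ultimately show ?case by blast
qed

lemma comb2complex_no_verts:
  assumes "comb2complex X" "verts X = {}"
  shows "edges X = {}" "faces X = {}"
proof -
  show "edges X = {}"
    using assms unfolding comb2complex_def by blast
  show "faces X = {}"
  proof (rule ccontr)
    assume "faces X \<noteq> {}"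
    then obtain R where "R \<in> faces X" by blast
    then have "closed_path X (bnd X R)"
      using assms(1) unfolding comb2complex_def by blast
    then obtain x where "x \<in> set (bnd X R)" "fst x \<in> edges X"
      unfolding closed_path_def by (meson list.set_sel(1))
    with \<open>edges X = {}\<close> show False by blast
  qed
qed

lemma finite_connected_extension:
  assumes X: "comb2complex X" "connected_sub X (verts X) (edges X) (faces X)"
    and C: "subcomplex X CV CE CF" "compact_sub CV CE CF"
    and T: "v0 \<in> verts X" "finite T" "T \<subseteq> verts X"
  obtains V0 E0 F0 where "subcomplex X V0 E0 F0" "compact_sub V0 E0 F0" "connected_sub X V0 E0 F0"
    "v0 \<in> V0" "T \<subseteq> V0" "CV \<subseteq> V0" "CE \<subseteq> E0" "CF \<subseteq> F0"
proof -
  let ?T = "CV \<union> T"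
  have T_verts: "?T \<subseteq> verts X"
    using C(1) T(3) unfolding subcomplex_def by blast
  have "\<exists>P. finite P \<and> P \<subseteq> edges X \<and>
      (\<forall>x \<in> insert t (src X ` P \<union> tgt X ` P). (adj_in X P)\<^sup>*\<^sup>* v0 x)" if "t \<in> ?T" for t
  proof -
    have "(adj_in X (edges X))\<^sup>*\<^sup>* v0 t"
      using X(2) T(1) T_verts that unfolding connected_sub_def by (meson subsetD)
    then show ?thesis by (rule finite_path_support)
  qed
  then obtain P where P: "\<And>t. t \<in> ?T \<Longrightarrow> finite (P t) \<and> P t \<subseteq> edges X \<and>
      (\<forall>x \<in> insert t (src X ` P t \<union> tgt X ` P t). (adj_in X (P t))\<^sup>*\<^sup>* v0 x)"
    by metis
  define V0 where "V0 = insert v0 (\<Union>t\<in>?T. insert t (src X ` P t \<union> tgt X ` P t))"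
  define E0 where "E0 = CE \<union> (\<Union>t\<in>?T. P t)"
  have reach: "(adj_in X E0)\<^sup>*\<^sup>* v0 x" if "x \<in> V0" for x
  proof (cases "x = v0")
    case False
    with that obtain t where t: "t \<in> ?T" "x \<in> insert t (src X ` P t \<union> tgt X ` P t)"
      unfolding V0_def by blast
    with P have "(adj_in X (P t))\<^sup>*\<^sup>* v0 x" by metis
    moreover have "P t \<subseteq> E0"
      using t(1) unfolding E0_def by blast
    ultimately show ?thesis
      using adj_in_rtranclp_mono by metis
  qed simp
  have "subcomplex X V0 E0 CF"
    using X(1) C(1) T(1) T_verts P
    unfolding subcomplex_def comb2complex_def V0_def E0_def by (simp add: subset_iff) blast
  moreover have "compact_sub V0 E0 CF"
    using C(2) T(2) P unfolding compact_sub_def V0_def E0_def by auto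
  moreover have "connected_sub X V0 E0 CF"
    using reach by (rule connected_subI)
  moreover have "v0 \<in> V0" "?T \<subseteq> V0" "CE \<subseteq> E0"
    unfolding V0_def E0_def by auto
  ultimately show ?thesis
    using that by blast
qed

lemma cell_aut_edge_ends:
  assumes "cell_aut X fv fe oe ff" "e \<in> edges X"
  shows "(src X (fe e) = fv (src X e) \<and> tgt X (fe e) = fv (tgt X e)) \<or>
         (src X (fe e) = fv (tgt X e) \<and> tgt X (fe e) = fv (src X e))"
proof -
  have "if oe e then src X (fe e) = fv (src X e) \<and> tgt X (fe e) = fv (tgt X e)
        else src X (fe e) = fv (tgt X e) \<and> tgt X (fe e) = fv (src X e)"
    using assms unfolding cell_aut_def by blast
  then show ?thesis by (auto split: if_splits)
qed

lemma cell_aut_rtranclp_adj_in: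
  assumes f: "cell_aut X fv fe oe ff" and E: "E \<subseteq> edges X" "fe ` E \<subseteq> E"
    and "(adj_in X E)\<^sup>*\<^sup>* x y"
  shows "(adj_in X E)\<^sup>*\<^sup>* (fv x) (fv y)"
  using assms(4)
proof (induction rule: rtranclp_induct)
  case (step y z)
  from step.hyps(2) obtain e where e: "e \<in> E"
    and ends: "(src X e = y \<and> tgt X e = z) \<or> (src X e = z \<and> tgt X e = y)"
    unfolding adj_in_def by blast
  have "fe e \<in> E" using e E(2) by blast
  moreover have "(src X (fe e) = fv (src X e) \<and> tgt X (fe e) = fv (tgt X e)) \<or>
      (src X (fe e) = fv (tgt X e) \<and> tgt X (fe e) = fv (src X e))"
    using cell_aut_edge_ends[OF f] e E(1) by blast
  ultimately have "adj_in X E (fv y) (fv z)"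
    using ends unfolding adj_in_def by blast
  with step.IH show ?case by (rule rtranclp.rtrancl_into_rtrancl)
qed simp

lemma cell_aut_face_edges:
  assumes "cell_aut X fv fe oe ff" "R \<in> faces X"
  shows "fst ` set (bnd X (ff R)) = fe ` fst ` set (bnd X R)"
proof -
  let ?img = "map (\<lambda>(e, b). (fe e, b = oe e)) (bnd X R)"
  have "\<forall>R\<in>faces X. \<exists>k. map (\<lambda>(e, b). (fe e, b = oe e)) (bnd X R) = rotate k (bnd X (ff R))
      \<or> map (\<lambda>(e, b). (fe e, b = oe e)) (bnd X R) = rotate k (rev_path (bnd X (ff R)))"
    using assms(1) unfolding cell_aut_def by (elim conjE)
  from bspec[OF this assms(2)] obtain k
    where "?img = rotate k (bnd X (ff R)) \<or> ?img = rotate k (rev_path (bnd X (ff R)))" ..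
  then have "set ?img = set (bnd X (ff R)) \<or> set ?img = set (rev_path (bnd X (ff R)))"
    by (elim disjE) (simp_all only: set_rotate simp_thms)
  moreover have "fst ` set (rev_path p) = fst ` set p" for p :: "('e \<times> bool) list"
    unfolding rev_path_def by (force simp: image_image)
  ultimately have "fst ` set ?img = fst ` set (bnd X (ff R))"
    by (elim disjE) simp_all
  moreover have "fst ` set ?img = fe ` fst ` set (bnd X R)"
    by (auto simp: image_image case_prod_beta)
  ultimately show ?thesis by simp
qed

lemma (in group) orbit_union_closed:
  assumes mult: "\<And>g h x. g \<in> carrier G \<Longrightarrow> h \<in> carrier G \<Longrightarrow> x \<in> A \<Longrightarrow> \<phi> (g \<otimes> h) x = \<phi> g (\<phi> h x)"
    and "A0 \<subseteq> A" "h \<in> carrier G"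
  shows "\<phi> h ` (\<Union>g\<in>carrier G. \<phi> g ` A0) \<subseteq> (\<Union>g\<in>carrier G. \<phi> g ` A0)"
proof
  fix y assume "y \<in> \<phi> h ` (\<Union>g\<in>carrier G. \<phi> g ` A0)"
  then obtain g x where gx: "g \<in> carrier G" "x \<in> A0" and y: "y = \<phi> h (\<phi> g x)" by blast
  have "x \<in> A" using gx(2) \<open>A0 \<subseteq> A\<close> by blast
  with mult[OF \<open>h \<in> carrier G\<close> gx(1)] y have "y = \<phi> (h \<otimes> g) x" by simp
  moreover have "h \<otimes> g \<in> carrier G"
    using \<open>h \<in> carrier G\<close> gx(1) by simp
  ultimately show "y \<in> (\<Union>g\<in>carrier G. \<phi> g ` A0)"
    using gx(2) by blast
qed

lemma (in group) orbit_union_superset: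
  assumes "\<And>x. x \<in> A0 \<Longrightarrow> \<phi> \<one> x = x"
  shows "A0 \<subseteq> (\<Union>g\<in>carrier G. \<phi> g ` A0)"
proof
  fix x assume "x \<in> A0"
  then have "x \<in> \<phi> \<one> ` A0" using assms by (metis image_eqI)
  then show "x \<in> (\<Union>g\<in>carrier G. \<phi> g ` A0)" by blast
qed

locale cell_action =
  fixes G :: "('g, 'm) monoid_scheme" (structure) and X :: "('v, 'e, 'f) cx2"
    and av :: "'g \<Rightarrow> 'v \<Rightarrow> 'v" and ae :: "'g \<Rightarrow> 'e \<Rightarrow> 'e"
    and ao :: "'g \<Rightarrow> 'e \<Rightarrow> bool" and af :: "'g \<Rightarrow> 'f \<Rightarrow> 'f"
  assumes faithful_cell_action: "faithful_cell_action G X av ae ao af"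

sublocale cell_action \<subseteq> group G
  using faithful_cell_action unfolding faithful_cell_action_def by blast

context cell_action
begin

lemma cell_aut: "g \<in> carrier G \<Longrightarrow> cell_aut X (av g) (ae g) (ao g) (af g)"
  using faithful_cell_action unfolding faithful_cell_action_def by blast

lemma av_closed: "g \<in> carrier G \<Longrightarrow> v \<in> verts X \<Longrightarrow> av g v \<in> verts X"
  using cell_aut unfolding cell_aut_def by (meson bij_betw_apply)

lemma ae_closed: "g \<in> carrier G \<Longrightarrow> e \<in> edges X \<Longrightarrow> ae g e \<in> edges X"
  using cell_aut unfolding cell_aut_def by (meson bij_betw_apply)

lemma af_closed: "g \<in> carrier G \<Longrightarrow> R \<in> faces X \<Longrightarrow> af g R \<in> faces X"
  using cell_aut unfolding cell_aut_def by (meson bij_betw_apply)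

lemma
  assumes "g \<in> carrier G" "h \<in> carrier G"
  shows av_mult: "v \<in> verts X \<Longrightarrow> av (g \<otimes> h) v = av g (av h v)"
    and ae_mult: "e \<in> edges X \<Longrightarrow> ae (g \<otimes> h) e = ae g (ae h e)"
    and af_mult: "R \<in> faces X \<Longrightarrow> af (g \<otimes> h) R = af g (af h R)"
  using faithful_cell_action assms unfolding faithful_cell_action_def by blast+

lemma
  shows av_one: "v \<in> verts X \<Longrightarrow> av \<one> v = v"
    and ae_one: "e \<in> edges X \<Longrightarrow> ae \<one> e = e"
    and af_one: "R \<in> faces X \<Longrightarrow> af \<one> R = R"
  using faithful_cell_action unfolding faithful_cell_action_def by blast+

lemma av_inv_cancel:
  assumes "g \<in> carrier G" "v \<in> verts X"
  shows "av (inv g) (av g v) = v"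
  using av_mult[of "inv g" g v] av_one[of v] assms by simp

lemma orbit_subcomplex:
  assumes "subcomplex X V0 E0 F0"
  shows "subcomplex X (\<Union>g\<in>carrier G. av g ` V0) (\<Union>g\<in>carrier G. ae g ` E0)
           (\<Union>g\<in>carrier G. af g ` F0)"
    (is "subcomplex X ?V ?E ?F")
proof -
  note sub = assms[unfolded subcomplex_def]
  have "?V \<subseteq> verts X" "?E \<subseteq> edges X" "?F \<subseteq> faces X"
    using sub av_closed ae_closed af_closed by blast+
  moreover have "\<forall>e\<in>?E. src X e \<in> ?V \<and> tgt X e \<in> ?V"
  proof
    fix e assume "e \<in> ?E"
    then obtain g e' where g: "g \<in> carrier G" and e': "e' \<in> E0" and e: "e = ae g e'"
      by blast
    have "av g (src X e') \<in> ?V" "av g (tgt X e') \<in> ?V"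
      using sub g e' by blast+
    moreover have "e' \<in> edges X"
      using sub e' by blast
    then have "(src X (ae g e') = av g (src X e') \<and> tgt X (ae g e') = av g (tgt X e')) \<or>
        (src X (ae g e') = av g (tgt X e') \<and> tgt X (ae g e') = av g (src X e'))"
      by (rule cell_aut_edge_ends[OF cell_aut[OF g]])
    ultimately show "src X e \<in> ?V \<and> tgt X e \<in> ?V"
      unfolding e
      by (elim disjE conjE) (simp_all only: simp_thms)
  qed
  moreover have "\<forall>R\<in>?F. \<forall>x\<in>set (bnd X R). fst x \<in> ?E"
  proof (intro ballI)
    fix R x assume "R \<in> ?F" "x \<in> set (bnd X R)"
    from \<open>R \<in> ?F\<close> obtain g R' where g: "g \<in> carrier G" and R': "R' \<in> F0" and R: "R = af g R'"
      by blast
    have "R' \<in> faces X"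
      using sub R' by blast
    have "fst x \<in> fst ` set (bnd X (af g R'))"
      using \<open>x \<in> set (bnd X R)\<close> R by simp
    then have "fst x \<in> ae g ` fst ` set (bnd X R')"
      by (simp only: cell_aut_face_edges[OF cell_aut[OF g] \<open>R' \<in> faces X\<close>])
    moreover have "fst ` set (bnd X R') \<subseteq> E0"
      using sub R' by blast
    ultimately show "fst x \<in> ?E"
      using g by blast
  qed
  ultimately show ?thesis
    by (simp only: subcomplex_def)
qed

lemma orbit_cocompact:
  assumes "subcomplex X V0 E0 F0" "compact_sub V0 E0 F0"
  shows "cocompact_sub G av ae af (\<Union>g\<in>carrier G. av g ` V0) (\<Union>g\<in>carrier G. ae g ` E0)
           (\<Union>g\<in>carrier G. af g ` F0)"
    (is "cocompact_sub G av ae af ?V ?E ?F")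
proof -
  have cells: "V0 \<subseteq> verts X" "E0 \<subseteq> edges X" "F0 \<subseteq> faces X"
    using assms(1) unfolding subcomplex_def by blast+
  have "\<forall>g\<in>carrier G. av g ` ?V \<subseteq> ?V \<and> ae g ` ?E \<subseteq> ?E \<and> af g ` ?F \<subseteq> ?F"
    by (intro ballI conjI orbit_union_closed[OF av_mult cells(1)]
        orbit_union_closed[OF ae_mult cells(2)] orbit_union_closed[OF af_mult cells(3)])
  moreover have "V0 \<subseteq> ?V" "E0 \<subseteq> ?E" "F0 \<subseteq> ?F"
    using cells by (auto intro!: orbit_union_superset av_one ae_one af_one)
  ultimately show ?thesis
    using assms(2) unfolding cocompact_sub_def compact_sub_def
    by (intro conjI exI[of _ V0] exI[of _ E0] exI[of _ F0]) simp_all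
qed

lemma rtranclp_adj_in_action:
  assumes "E \<subseteq> edges X" "\<And>g. g \<in> carrier G \<Longrightarrow> ae g ` E \<subseteq> E"
    and "g \<in> carrier G" "(adj_in X E)\<^sup>*\<^sup>* x y"
  shows "(adj_in X E)\<^sup>*\<^sup>* (av g x) (av g y)"
  using cell_aut_rtranclp_adj_in[OF cell_aut[OF assms(3)] assms(1) assms(2)[OF assms(3)] assms(4)] .

lemma base_component_subgroup:
  assumes E: "E \<subseteq> edges X" "\<And>g. g \<in> carrier G \<Longrightarrow> ae g ` E \<subseteq> E" and v0: "v0 \<in> verts X"
  shows "subgroup {g \<in> carrier G. (adj_in X E)\<^sup>*\<^sup>* v0 (av g v0)} G"
    (is "subgroup ?K G")
proof -
  have move: "(adj_in X E)\<^sup>*\<^sup>* (av g x) (av g y)"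
    if "g \<in> carrier G" "(adj_in X E)\<^sup>*\<^sup>* x y" for g x y
    using rtranclp_adj_in_action[of E, OF E(1) E(2) that] .
  show ?thesis
  proof (rule subgroupI)
    show "?K \<subseteq> carrier G" by blast
    have "\<one> \<in> ?K"
      using av_one[OF v0] by simp
    then show "?K \<noteq> {}" by blast
  next
    fix g assume "g \<in> ?K"
    then have g: "g \<in> carrier G" and "(adj_in X E)\<^sup>*\<^sup>* v0 (av g v0)" by simp_all
    then have "(adj_in X E)\<^sup>*\<^sup>* (av (inv g) v0) (av (inv g) (av g v0))"
      by (intro move) simp_all
    then have "(adj_in X E)\<^sup>*\<^sup>* v0 (av (inv g) v0)"
      using av_inv_cancel[OF g v0] by (simp add: adj_in_rtranclp_sym)
    with g show "inv g \<in> ?K" by simp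
  next
    fix a b assume "a \<in> ?K" "b \<in> ?K"
    then have a: "a \<in> carrier G" "(adj_in X E)\<^sup>*\<^sup>* v0 (av a v0)"
      and b: "b \<in> carrier G" "(adj_in X E)\<^sup>*\<^sup>* v0 (av b v0)" by simp_all
    have "(adj_in X E)\<^sup>*\<^sup>* (av a v0) (av a (av b v0))"
      using move[OF a(1) b(2)] .
    then have "(adj_in X E)\<^sup>*\<^sup>* (av a v0) (av (a \<otimes> b) v0)"
      using av_mult[OF a(1) b(1) v0] by simp
    with a(2) have "(adj_in X E)\<^sup>*\<^sup>* v0 (av (a \<otimes> b) v0)"
      by (rule rtranclp_trans)
    with a(1) b(1) show "a \<otimes> b \<in> ?K" by simp
  qed
qed

lemma generators_in_base_component:
  assumes E: "E \<subseteq> edges X" "\<And>g. g \<in> carrier G \<Longrightarrow> ae g ` E \<subseteq> E"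
    and reach: "\<And>x. x \<in> V0 \<Longrightarrow> (adj_in X E)\<^sup>*\<^sup>* v0 x"
    and S: "S \<subseteq> carrier G" "(\<lambda>s. av s v0) ` S \<subseteq> V0" and vs: "vs \<subseteq> V0"
  shows "S \<union> (\<Union>v\<in>vs. vstab G av v) \<subseteq> {g \<in> carrier G. (adj_in X E)\<^sup>*\<^sup>* v0 (av g v0)}"
proof
  fix h assume "h \<in> S \<union> (\<Union>v\<in>vs. vstab G av v)"
  then consider "h \<in> S" | w where "w \<in> vs" "h \<in> carrier G" "av h w = w"
    unfolding vstab_def by blast
  then show "h \<in> {g \<in> carrier G. (adj_in X E)\<^sup>*\<^sup>* v0 (av g v0)}"
  proof cases
    case 1
    then have "av h v0 \<in> V0" using S(2) by blast
    with 1 S(1) reach show ?thesis by blast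
  next
    case 2
    then have w: "(adj_in X E)\<^sup>*\<^sup>* v0 w" using vs reach by blast
    have "(adj_in X E)\<^sup>*\<^sup>* (av h v0) (av h w)"
      using rtranclp_adj_in_action[of E, OF E(1) E(2) \<open>h \<in> carrier G\<close> w] .
    then have "(adj_in X E)\<^sup>*\<^sup>* w (av h v0)"
      using 2 by (simp add: adj_in_rtranclp_sym)
    with w have "(adj_in X E)\<^sup>*\<^sup>* v0 (av h v0)"
      by (rule rtranclp_trans)
    with 2 show ?thesis by simp
  qed
qed

lemma orbit_connected:
  assumes sub: "subcomplex X V0 E0 F0" and conn: "connected_sub X V0 E0 F0" and v0: "v0 \<in> V0"
    and S: "S \<subseteq> carrier G" "(\<lambda>s. av s v0) ` S \<subseteq> V0" and vs: "vs \<subseteq> V0"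
    and gen: "generate G (S \<union> (\<Union>v\<in>vs. vstab G av v)) = carrier G"
  shows "connected_sub X (\<Union>g\<in>carrier G. av g ` V0) (\<Union>g\<in>carrier G. ae g ` E0)
           (\<Union>g\<in>carrier G. af g ` F0)"
proof -
  define E where "E = (\<Union>g\<in>carrier G. ae g ` E0)"
  have cells: "V0 \<subseteq> verts X" "E0 \<subseteq> edges X"
    using sub unfolding subcomplex_def by blast+
  have E_edges: "E \<subseteq> edges X"
    using cells ae_closed unfolding E_def by blast
  have E_inv: "ae g ` E \<subseteq> E" if "g \<in> carrier G" for g
    unfolding E_def by (rule orbit_union_closed[OF ae_mult cells(2) that])
  have "E0 \<subseteq> E"
    unfolding E_def using cells(2) by (auto intro!: orbit_union_superset ae_one)
  have reach: "(adj_in X E)\<^sup>*\<^sup>* v0 x" if "x \<in> V0" for x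
  proof -
    have "(adj_in X E0)\<^sup>*\<^sup>* v0 x"
      using conn v0 that unfolding connected_sub_def by meson
    then show ?thesis by (rule adj_in_rtranclp_mono[OF \<open>E0 \<subseteq> E\<close>])
  qed
  have "carrier G \<subseteq> {g \<in> carrier G. (adj_in X E)\<^sup>*\<^sup>* v0 (av g v0)}"
    using generate_subgroup_incl[OF generators_in_base_component[OF E_edges E_inv reach S vs]
        base_component_subgroup[OF E_edges E_inv]] gen v0 cells(1) by blast
  show ?thesis
    unfolding E_def[symmetric]
  proof (rule connected_subI)
    fix x assume "x \<in> (\<Union>g\<in>carrier G. av g ` V0)"
    then obtain g u where g: "g \<in> carrier G" and u: "u \<in> V0" and x: "x = av g u" by blast
    have "(adj_in X E)\<^sup>*\<^sup>* v0 (av g v0)"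
      using \<open>carrier G \<subseteq> _\<close> g by blast
    moreover have "(adj_in X E)\<^sup>*\<^sup>* (av g v0) x"
      using rtranclp_adj_in_action[of E, OF E_edges E_inv g reach[OF u]] x by simp
    ultimately show "(adj_in X E)\<^sup>*\<^sup>* v0 x"
      by (rule rtranclp_trans)
  qed
qed

end

theorem lemma3p21:
  fixes X :: "('v, 'e, 'f) cx2"
    and G :: "('g, 'm) monoid_scheme"
    and av :: "'g \<Rightarrow> 'v \<Rightarrow> 'v" and ae :: "'g \<Rightarrow> 'e \<Rightarrow> 'e"
    and ao :: "'g \<Rightarrow> 'e \<Rightarrow> bool" and af :: "'g \<Rightarrow> 'f \<Rightarrow> 'f"
    and CV :: "'v set" and CE :: "'e set" and CF :: "'f set"
  assumes "comb2complex X"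
    and "connected_sub X (verts X) (edges X) (faces X)"
    and "thin X"
    and "faithful_cell_action G X av ae ao af"
    and "fg_rel_stabs G av (verts X)"
    and "subcomplex X CV CE CF" and "compact_sub CV CE CF"
  shows "\<exists>V0 E0 F0. subcomplex X V0 E0 F0 \<and> compact_sub V0 E0 F0 \<and>
           connected_sub X V0 E0 F0 \<and> CV \<subseteq> V0 \<and> CE \<subseteq> E0 \<and> CF \<subseteq> F0 \<and>
           fg_rel_stabs G av V0 \<and>
           (let V = (\<Union>g\<in>carrier G. av g ` V0);
                E = (\<Union>g\<in>carrier G. ae g ` E0);
                F = (\<Union>g\<in>carrier G. af g ` F0)
            in subcomplex X V E F \<and> connected_sub X V E F \<and>
               cocompact_sub G av ae af V E F)"
proof -
  interpret cell_action G X av ae ao af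
    using assms(4) by unfold_locales
  obtain S vs where S: "finite S" "S \<subseteq> carrier G" and vs: "finite vs" "vs \<subseteq> verts X"
    and gen: "generate G (S \<union> (\<Union>v\<in>vs. vstab G av v)) = carrier G"
    using assms(5) unfolding fg_rel_stabs_def by blast
  show ?thesis
  proof (cases "verts X = {}")
    case True
    then have "CV = {}" "CE = {}" "CF = {}"
      using assms(6) comb2complex_no_verts[OF assms(1)] unfolding subcomplex_def by blast+
    moreover have "fg_rel_stabs G av {}"
      using assms(5) True by simp
    ultimately show ?thesis
      by (intro exI[of _ "{}"]) (simp add: subcomplex_def compact_sub_def connected_sub_def
          cocompact_sub_def)
  next
    case False
    then obtain v0 where v0: "v0 \<in> verts X" by blast
    have "finite (vs \<union> (\<lambda>s. av s v0) ` S)"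
      using S(1) vs(1) by simp
    moreover have "vs \<union> (\<lambda>s. av s v0) ` S \<subseteq> verts X"
      using S(2) vs(2) v0 av_closed by blast
    ultimately obtain V0 E0 F0 where Y0: "subcomplex X V0 E0 F0" "compact_sub V0 E0 F0"
      "connected_sub X V0 E0 F0" "v0 \<in> V0" "vs \<union> (\<lambda>s. av s v0) ` S \<subseteq> V0"
      and C: "CV \<subseteq> V0" "CE \<subseteq> E0" "CF \<subseteq> F0"
      by (rule finite_connected_extension[OF assms(1,2,6,7) v0])
    have "fg_rel_stabs G av V0"
      unfolding fg_rel_stabs_def using S vs(1) gen Y0(5)
      by (intro exI[of _ S] exI[of _ vs]) auto
    moreover have "connected_sub X (\<Union>g\<in>carrier G. av g ` V0) (\<Union>g\<in>carrier G. ae g ` E0)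
        (\<Union>g\<in>carrier G. af g ` F0)"
      using Y0 S gen by (intro orbit_connected) auto
    ultimately show ?thesis
      using Y0 C orbit_subcomplex[OF Y0(1)] orbit_cocompact[OF Y0(1,2)]
      by (intro exI[of _ V0] exI[of _ E0] exI[of _ F0]) (simp add: Let_def)
  qed
qed

end
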